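(* Let $G$ be a graph, let $R\subseteq V(G)$ be the vertex set of an induced copy of $P_3$ in $G$, and let $C\subseteq V(G)\setminus R$ be a clique in $G$ with $m\ge 2$ vertices, each of odd degree in $G$. Assume every vertex of $R$ is adjacent to every vertex of $C$. Then one can admissibly remove from $G$ a subset of $C\cup R$ such that the remaining vertices of $C\cup R$ form a clique with at most $m-1$ vertices, each of odd degree in the remaining graph.
   Context: $P_3$ denotes the path with three edges (four vertices). Removing a set $T$ of vertices from a graph $G$ is a simple admissible removal if $T$ is an independent set in $G$ and the number of edges between $T$ and $V(G)\setminus T$ is even. Removing a set of vertices is admissible if it can be realised by a sequence of simple admissible removals, each performed in the graph remaining after the previous ones. Degrees are always taken in the current remaining graph. *)

theory Defs
  imports Main
begin

text \<open>A (finite simple) graph is a finite vertex set V together with a symmetric,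
irreflexive adjacency relation E; only edges with both ends in V count.
Removing vertices gives the induced subgraph on the remaining vertex set.\<close>

definition graph :: "'a set \<Rightarrow> ('a \<Rightarrow> 'a \<Rightarrow> bool) \<Rightarrow> bool" where
  "graph V E \<longleftrightarrow> finite V \<and> (\<forall>x y. E x y \<longrightarrow> E y x) \<and> (\<forall>x. \<not> E x x)"

definition degree :: "'a set \<Rightarrow> ('a \<Rightarrow> 'a \<Rightarrow> bool) \<Rightarrow> 'a \<Rightarrow> nat" where
  "degree V E v = card {u \<in> V. E v u}"

definition independent :: "('a \<Rightarrow> 'a \<Rightarrow> bool) \<Rightarrow> 'a set \<Rightarrow> bool" where
  "independent E T \<longleftrightarrow> (\<forall>x\<in>T. \<forall>y\<in>T. \<not> E x y)"

definition clique :: "('a \<Rightarrow> 'a \<Rightarrow> bool) \<Rightarrow> 'a set \<Rightarrow> bool" where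
  "clique E K \<longleftrightarrow> (\<forall>x\<in>K. \<forall>y\<in>K. x \<noteq> y \<longrightarrow> E x y)"

definition cut_size :: "'a set \<Rightarrow> ('a \<Rightarrow> 'a \<Rightarrow> bool) \<Rightarrow> 'a set \<Rightarrow> nat" where
  "cut_size V E T = card {(x, y). x \<in> T \<and> y \<in> V - T \<and> E x y}"

definition simple_admissible :: "'a set \<Rightarrow> ('a \<Rightarrow> 'a \<Rightarrow> bool) \<Rightarrow> 'a set \<Rightarrow> bool" where
  "simple_admissible V E T \<longleftrightarrow> T \<subseteq> V \<and> independent E T \<and> even (cut_size V E T)"

inductive admissible :: "'a set \<Rightarrow> ('a \<Rightarrow> 'a \<Rightarrow> bool) \<Rightarrow> 'a set \<Rightarrow> bool" where
  adm_empty: "admissible V E {}"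
| adm_step: "simple_admissible V E T \<Longrightarrow> admissible (V - T) E S \<Longrightarrow> admissible V E (T \<union> S)"

definition induced_P3 :: "'a set \<Rightarrow> ('a \<Rightarrow> 'a \<Rightarrow> bool) \<Rightarrow> 'a set \<Rightarrow> bool" where
  "induced_P3 V E R \<longleftrightarrow> (\<exists>a b c d. R = {a, b, c, d} \<and> R \<subseteq> V \<and> distinct [a, b, c, d]
      \<and> E a b \<and> E b c \<and> E c d \<and> \<not> E a c \<and> \<not> E a d \<and> \<not> E b d)"

end

theory Submission
  imports Defs
begin

text \<open>Removing a set S lowers the degree of a remaining vertex v by the number of neighbours of v
in S, so all parities can be tracked in the original graph. Pick two vertices x0, x1 of the clique;
together with the path a-b-c-d they form a six-vertex configuration. A case analysis on the
degree parities of a, b, c, d shows: if these degrees have even sum, all six vertices can be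
removed admissibly; otherwise all of them except one path vertex r, which then has odd degree.
A vertex of C is adjacent to every other vertex of C \<union> R, so after removing an even number of
vertices of C \<union> R it still has odd degree, and after removing an odd number one more vertex of C
has even degree and can be removed. In the odd case with m \<ge> 3 one first removes a third clique
vertex and then r, whose degree has just become even.\<close>

lemma graph_sym: "graph V E \<Longrightarrow> E x y \<Longrightarrow> E y x"
  and graph_irrefl: "graph V E \<Longrightarrow> \<not> E x x"
  and graph_finite: "graph V E \<Longrightarrow> finite V"
  and graph_Diff: "graph V E \<Longrightarrow> graph (V - S) E"
  by (auto simp: graph_def)

lemma degree_Diff:
  assumes "graph V E" "S \<subseteq> V"
  shows "degree (V - S) E v + card (S \<inter> {u. E v u}) = degree V E v"
proof -
  have "finite V" using assms(1) by (rule graph_finite)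
  then have "card ({u \<in> V - S. E v u} \<union> (S \<inter> {u. E v u})) = card {u \<in> V - S. E v u} + card (S \<inter> {u. E v u})"
    using assms(2) by (intro card_Un_disjoint) (auto intro: finite_subset)
  moreover have "{u \<in> V - S. E v u} \<union> (S \<inter> {u. E v u}) = {u \<in> V. E v u}" using assms(2) by blast
  ultimately show ?thesis unfolding degree_def by simp
qed

lemma odd_degree_Diff_iff:
  assumes "graph V E" "S \<subseteq> V"
  shows "odd (degree (V - S) E v) \<longleftrightarrow> odd (degree V E v + card (S \<inter> {u. E v u}))"
  using degree_Diff[OF assms, of v] by (metis add.assoc even_add)

lemma cut_size_independent:
  assumes "graph V E" "T \<subseteq> V" "independent E T"
  shows "cut_size V E T = (\<Sum>x\<in>T. degree V E x)"
proof -
  have "{(x, y). x \<in> T \<and> y \<in> V - T \<and> E x y} = Sigma T (\<lambda>x. {u \<in> V. E x u})"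
    using assms(3) unfolding independent_def by auto
  moreover have "finite T" "finite V"
    using assms(1,2) graph_finite finite_subset by blast+
  ultimately show ?thesis
    unfolding cut_size_def degree_def by (simp add: card_SigmaI)
qed

lemma simple_admissible_Diff:
  assumes "graph V E" "S \<subseteq> V" "T \<subseteq> V - S" "independent E T"
    and "even (\<Sum>x\<in>T. degree V E x + card (S \<inter> {u. E x u}))"
  shows "simple_admissible (V - S) E T"
proof -
  have "(\<Sum>x\<in>T. degree V E x + card (S \<inter> {u. E x u}))
      = (\<Sum>x\<in>T. degree (V - S) E x) + 2 * (\<Sum>x\<in>T. card (S \<inter> {u. E x u}))"
    by (simp add: sum.distrib mult_2 flip: degree_Diff[OF assms(1,2)])
  then have "even (\<Sum>x\<in>T. degree (V - S) E x)" using assms(5) by simp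
  then show ?thesis
    unfolding simple_admissible_def using cut_size_independent[OF graph_Diff[OF assms(1)]] assms(3,4) by metis
qed

lemma admissible_Un:
  "admissible V E S \<Longrightarrow> simple_admissible (V - S) E T \<Longrightarrow> admissible V E (S \<union> T)"
proof (induction rule: admissible.induct)
  case (adm_empty V E)
  then show ?case using adm_step[of V E T "{}"] by (simp add: admissible.adm_empty)
next
  case (adm_step V E T' S)
  moreover have "V - (T' \<union> S) = V - T' - S" by blast
  ultimately have "admissible (V - T') E (S \<union> T)" by simp
  then show ?case using admissible.adm_step[OF adm_step(1)] by (simp add: Un_assoc)
qed

lemma admissible_insert:
  assumes "graph V E" "S \<subseteq> V" "admissible V E S" "v \<in> V - S" "even (degree (V - S) E v)"
  shows "admissible V E (insert v S)"
proof -
  have "independent E {v}" using graph_irrefl[OF assms(1)] by (simp add: independent_def)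
  then have "cut_size (V - S) E {v} = degree (V - S) E v"
    using cut_size_independent[OF graph_Diff[OF assms(1)]] assms(4) by simp
  then have "simple_admissible (V - S) E {v}"
    using \<open>independent E {v}\<close> assms(4,5) by (simp add: simple_admissible_def)
  from admissible_Un[OF assms(3) this] show ?thesis by simp
qed

text \<open>Degrees in the graph left after removing S are expressed through the original graph, so
that the cut parity of each step can be evaluated by simplification.\<close>

fun admissible_sequence :: "'a set \<Rightarrow> ('a \<Rightarrow> 'a \<Rightarrow> bool) \<Rightarrow> 'a set \<Rightarrow> 'a set list \<Rightarrow> bool" where
  "admissible_sequence V E S [] \<longleftrightarrow> True"
| "admissible_sequence V E S (T # Ts) \<longleftrightarrow>
     T \<subseteq> V - S \<and> independent E T \<and> even (\<Sum>x\<in>T. degree V E x + card (S \<inter> {u. E x u})) \<and>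
     admissible_sequence V E (S \<union> T) Ts"

lemma admissible_sequence_imp_admissible:
  assumes "graph V E" "S \<subseteq> V" "admissible V E S" "admissible_sequence V E S Ts"
  shows "admissible V E (S \<union> \<Union>(set Ts))"
  using assms(2-4)
proof (induction Ts arbitrary: S)
  case (Cons T Ts)
  then have "admissible V E (S \<union> T)"
    by (intro admissible_Un simple_admissible_Diff[OF assms(1)]) auto
  moreover have "S \<union> T \<subseteq> V" using Cons.prems by auto
  ultimately have "admissible V E (S \<union> T \<union> \<Union>(set Ts))" using Cons by simp
  then show ?case by (simp add: Un_assoc)
qed simp

lemma admissible_sequence_from_empty:
  "graph V E \<Longrightarrow> admissible_sequence V E {} Ts \<Longrightarrow> \<Union>(set Ts) = S \<Longrightarrow> admissible V E S"
  using admissible_sequence_imp_admissible[of V E "{}" Ts] by (simp add: adm_empty)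

locale P3_with_odd_apices =
  fixes V :: "'a set" and E :: "'a \<Rightarrow> 'a \<Rightarrow> bool" and a b c d x0 x1 :: 'a
  assumes graph: "graph V E"
    and vertices: "a \<in> V" "b \<in> V" "c \<in> V" "d \<in> V" "x0 \<in> V" "x1 \<in> V"
    and distinct: "distinct [a, b, c, d, x0, x1]"
    and path: "E a b" "E b c" "E c d" "\<not> E a c" "\<not> E a d" "\<not> E b d"
    and apices: "\<forall>v\<in>{a, b, c, d, x1}. E x0 v" "\<forall>v\<in>{a, b, c, d}. E x1 v"
    and odd_apices: "odd (degree V E x0)" "odd (degree V E x1)"
begin

lemma adjacency:
  "E a b" "E b a" "E b c" "E c b" "E c d" "E d c"
  "\<not> E a c" "\<not> E c a" "\<not> E a d" "\<not> E d a" "\<not> E b d" "\<not> E d b"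
  "E x0 a" "E x0 b" "E x0 c" "E x0 d" "E x0 x1" "E x1 a" "E x1 b" "E x1 c" "E x1 d"
  "E a x0" "E b x0" "E c x0" "E d x0" "E x1 x0" "E a x1" "E b x1" "E c x1" "E d x1"
  "\<not> E a a" "\<not> E b b" "\<not> E c c" "\<not> E d d" "\<not> E x0 x0" "\<not> E x1 x1"
  using path apices graph_sym[OF graph] graph_irrefl[OF graph] by blast+

lemma distinct_vertices:
  "a \<noteq> b" "a \<noteq> c" "a \<noteq> d" "a \<noteq> x0" "a \<noteq> x1" "b \<noteq> c" "b \<noteq> d" "b \<noteq> x0" "b \<noteq> x1"
  "c \<noteq> d" "c \<noteq> x0" "c \<noteq> x1" "d \<noteq> x0" "d \<noteq> x1" "x0 \<noteq> x1"
  using distinct by auto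

lemmas configuration = adjacency vertices odd_apices distinct_vertices distinct_vertices[symmetric]

text \<open>Each parity pattern of a, b, c, d is settled by an explicit removal order. The apices x0
and x1 have odd degree, so each of them becomes removable only after an odd number of its
neighbours is gone.\<close>

lemma admissible_remove_all:
  assumes "even (degree V E a + degree V E b + degree V E c + degree V E d)"
  shows "admissible V E {a, b, c, d, x0, x1}"
proof -
  have by_sequence: "admissible_sequence V E {} Ts \<Longrightarrow> \<Union>(set Ts) = {a, b, c, d, x0, x1} \<Longrightarrow> ?thesis"
    for Ts by (rule admissible_sequence_from_empty[OF graph])
  consider
    "even (degree V E b)" "even (degree V E c)"
  | "even (degree V E a)" "odd (degree V E c)"
  | "even (degree V E a)" "odd (degree V E b)" "even (degree V E c)"
  | "odd (degree V E a)" "even (degree V E b)" "odd (degree V E c)"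
  | "odd (degree V E a)" "odd (degree V E b)" "even (degree V E c)"
  | "odd (degree V E a)" "odd (degree V E b)" "odd (degree V E c)" "odd (degree V E d)"
    using assms by auto
  then show ?thesis
  proof cases
    case 1
    show ?thesis by (rule by_sequence[of "[{b}, {x0}, {c}, {x1}, {a, d}]"])
      (use assms 1 in \<open>auto simp: configuration independent_def\<close>)
  next
    case 2
    show ?thesis by (rule by_sequence[of "[{a}, {x0}, {c}, {x1}, {b, d}]"])
      (use assms 2 in \<open>auto simp: configuration independent_def\<close>)
  next
    case 3
    show ?thesis by (rule by_sequence[of "[{c}, {x0}, {a, d}, {b}, {x1}]"])
      (use assms 3 in \<open>auto simp: configuration independent_def\<close>)
  next
    case 4
    show ?thesis by (rule by_sequence[of "[{b}, {x0}, {a, c}, {d}, {x1}]"])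
      (use assms 4 in \<open>auto simp: configuration independent_def\<close>)
  next
    case 5
    show ?thesis by (rule by_sequence[of "[{c}, {x0}, {a}, {x1}, {b, d}]"])
      (use assms 5 in \<open>auto simp: configuration independent_def\<close>)
  next
    case 6
    show ?thesis by (rule by_sequence[of "[{a, c}, {d}, {x0}, {b}, {x1}]"])
      (use 6 in \<open>auto simp: configuration independent_def\<close>)
  qed
qed

lemma admissible_remove_all_but_one:
  assumes "odd (degree V E a + degree V E b + degree V E c + degree V E d)"
  shows "\<exists>r\<in>{a, b, c, d}. admissible V E ({a, b, c, d, x0, x1} - {r}) \<and>
           odd (degree (V - ({a, b, c, d, x0, x1} - {r})) E r)"
proof -
  have by_sequence: "?thesis"
    if "r \<in> {a, b, c, d}" "admissible_sequence V E {} Ts" "\<Union>(set Ts) = {a, b, c, d, x0, x1} - {r}"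
      "odd (degree V E r + card (\<Union>(set Ts) \<inter> {u. E r u}))" for r Ts
  proof -
    have "{a, b, c, d, x0, x1} - {r} \<subseteq> V" using configuration by auto
    then have "odd (degree (V - ({a, b, c, d, x0, x1} - {r})) E r)"
      using odd_degree_Diff_iff[OF graph] that(3,4) by simp
    moreover have "admissible V E ({a, b, c, d, x0, x1} - {r})"
      by (rule admissible_sequence_from_empty[OF graph that(2,3)])
    ultimately show ?thesis using that(1) by blast
  qed
  consider
    "even (degree V E a)" "even (degree V E b)" "even (degree V E c)" "odd (degree V E d)"
  | "even (degree V E a)" "even (degree V E b)" "odd (degree V E c)" "even (degree V E d)"
  | "even (degree V E a)" "odd (degree V E b)" "even (degree V E c)" "even (degree V E d)"
  | "even (degree V E a)" "odd (degree V E b)" "odd (degree V E c)" "odd (degree V E d)"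
  | "odd (degree V E a)" "even (degree V E b)" "even (degree V E c)" "even (degree V E d)"
  | "odd (degree V E a)" "even (degree V E b)" "odd (degree V E c)" "odd (degree V E d)"
  | "odd (degree V E a)" "odd (degree V E b)" "even (degree V E c)" "odd (degree V E d)"
  | "odd (degree V E a)" "odd (degree V E b)" "odd (degree V E c)" "even (degree V E d)"
    using assms by (cases "even (degree V E a)"; cases "even (degree V E b)"; cases "even (degree V E c)") auto
  then show ?thesis
  proof cases
    case 1
    show ?thesis by (rule by_sequence[of a "[{b}, {x0}, {c}, {x1}, {d}]"])
      (use 1 in \<open>auto simp: configuration independent_def\<close>)
  next
    case 2
    show ?thesis by (rule by_sequence[of d "[{a}, {x0}, {b}, {x1}, {c}]"])
      (use 2 in \<open>auto simp: configuration independent_def\<close>)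
  next
    case 3
    show ?thesis by (rule by_sequence[of b "[{c}, {x0}, {d}, {x1}, {a}]"])
      (use 3 in \<open>auto simp: configuration independent_def\<close>)
  next
    case 4
    show ?thesis by (rule by_sequence[of b "[{a}, {x0}, {c}, {x1}, {d}]"])
      (use 4 in \<open>auto simp: configuration independent_def\<close>)
  next
    case 5
    show ?thesis by (rule by_sequence[of d "[{b}, {x0}, {c}, {x1}, {a}]"])
      (use 5 in \<open>auto simp: configuration independent_def\<close>)
  next
    case 6
    show ?thesis by (rule by_sequence[of c "[{b}, {x0}, {d}, {x1}, {a}]"])
      (use 6 in \<open>auto simp: configuration independent_def\<close>)
  next
    case 7
    show ?thesis by (rule by_sequence[of b "[{c}, {x0}, {a}, {x1}, {d}]"])
      (use 7 in \<open>auto simp: configuration independent_def\<close>)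
  next
    case 8
    show ?thesis by (rule by_sequence[of c "[{d}, {x0}, {a}, {x1}, {b}]"])
      (use 8 in \<open>auto simp: configuration independent_def\<close>)
  qed
qed

end

locale odd_clique_joined =
  fixes V :: "'a set" and E :: "'a \<Rightarrow> 'a \<Rightarrow> bool" and R C :: "'a set"
  assumes graph: "graph V E"
    and R_subset: "R \<subseteq> V" and C_subset: "C \<subseteq> V - R"
    and clique: "clique E C" and odd_degree: "\<forall>v\<in>C. odd (degree V E v)"
    and joined: "\<forall>r\<in>R. \<forall>v\<in>C. E r v"
begin

lemma adjacent_in_union:
  assumes "v \<in> C" "u \<in> C \<union> R" "u \<noteq> v"
  shows "E v u"
proof (cases "u \<in> C")
  case True
  then show ?thesis using clique assms unfolding clique_def by auto
next
  case False
  then have "E u v" using joined assms by blast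
  then show ?thesis by (rule graph_sym[OF graph])
qed

lemma union_subset: "C \<union> R \<subseteq> V"
  using R_subset C_subset by blast

lemma odd_degree_after_even_removal:
  assumes "S \<subseteq> C \<union> R" "v \<in> C - S" "even (card S)"
  shows "odd (degree (V - S) E v)"
proof -
  have "S \<inter> {u. E v u} = S" using adjacent_in_union assms(1,2) by blast
  moreover have "S \<subseteq> V" using assms(1) union_subset by blast
  ultimately show ?thesis using odd_degree_Diff_iff[OF graph, of S v] odd_degree assms(2,3) by auto
qed

lemma admissible_insert_after_odd_removal:
  assumes "admissible V E S" "S \<subseteq> C \<union> R" "odd (card S)" "x \<in> C - S"
  shows "admissible V E (insert x S)"
proof -
  have "S \<subseteq> V" using assms(2) union_subset by blast
  moreover have "S \<inter> {u. E x u} = S" using adjacent_in_union assms(2,4) by blast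
  ultimately have "even (degree (V - S) E x)"
    using degree_Diff[OF graph, of S x] odd_degree assms(3,4) by (metis DiffD1 even_add)
  then show ?thesis
    using admissible_insert[OF graph \<open>S \<subseteq> V\<close> assms(1)] assms(4) C_subset by blast
qed

lemma extend_to_odd_remainder:
  assumes "admissible V E S" "R \<subseteq> S" "S \<subseteq> C \<union> R"
  shows "\<exists>S'. S \<subseteq> S' \<and> S' \<subseteq> C \<union> R \<and> admissible V E S' \<and> (C \<union> R) - S' \<subseteq> C - S \<and>
           (\<forall>v\<in>(C \<union> R) - S'. odd (degree (V - S') E v))"
proof -
  have "S \<subseteq> V" using assms(3) union_subset by blast
  then have "finite S" using graph_finite[OF graph] by (rule finite_subset)
  have remainder: "(C \<union> R) - S' \<subseteq> C - S" if "S \<subseteq> S'" for S'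
    using assms(2) that by blast
  consider "even (card S)" | "C \<subseteq> S" | x where "odd (card S)" "x \<in> C - S" by blast
  then show ?thesis
  proof cases
    case 1
    then have "\<forall>v\<in>(C \<union> R) - S. odd (degree (V - S) E v)"
      using odd_degree_after_even_removal[OF assms(3)] remainder[of S] by blast
    with assms(1,3) remainder[of S] show ?thesis by blast
  next
    case 2
    then have "(C \<union> R) - S = {}" using assms(2) by blast
    with assms(1,3) show ?thesis by blast
  next
    case 3
    let ?S' = "insert x S"
    have "?S' \<subseteq> C \<union> R" using assms(3) 3(2) by blast
    moreover have "even (card ?S')" using \<open>finite S\<close> 3 by simp
    then have "\<forall>v\<in>(C \<union> R) - ?S'. odd (degree (V - ?S') E v)"
      using odd_degree_after_even_removal[OF calculation] remainder[of ?S'] by blast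
    moreover have "admissible V E ?S'"
      using admissible_insert_after_odd_removal assms(1,3) 3 by blast
    ultimately show ?thesis using remainder[of ?S'] by blast
  qed
qed

end

locale P3_joined_odd_clique =
  odd_clique_joined V E R C + P3_with_odd_apices V E a b c d x0 x1
  for V :: "'a set" and E R C a b c d x0 x1 +
  assumes R_eq: "R = {a, b, c, d}" and apices_in_C: "x0 \<in> C" "x1 \<in> C"
begin

lemma exists_admissible_odd_remainder:
  "\<exists>S. S \<subseteq> C \<union> R \<and> admissible V E S \<and> (\<forall>v\<in>(C \<union> R) - S. odd (degree (V - S) E v)) \<and>
       ((C \<union> R) - S \<subseteq> C - {x0} \<or> (\<exists>r. (C \<union> R) - S = {r}))"
proof (cases "even (degree V E a + degree V E b + degree V E c + degree V E d)")
  case True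
  have "R \<subseteq> {a, b, c, d, x0, x1}" "{a, b, c, d, x0, x1} \<subseteq> C \<union> R"
    using R_eq apices_in_C by auto
  then obtain S' where "admissible V E S'" "S' \<subseteq> C \<union> R" "(C \<union> R) - S' \<subseteq> C - {a, b, c, d, x0, x1}"
      "\<forall>v\<in>(C \<union> R) - S'. odd (degree (V - S') E v)"
    using extend_to_odd_remainder[OF admissible_remove_all[OF True]] by blast
  then show ?thesis by blast
next
  case False
  let ?S = "{a, b, c, d, x0, x1}"
  obtain r where r: "r \<in> R" and admissible_S: "admissible V E (?S - {r})"
    and odd_r: "odd (degree (V - (?S - {r})) E r)"
    using admissible_remove_all_but_one[OF False] R_eq by blast
  have S_subset: "?S - {r} \<subseteq> C \<union> R" using R_eq apices_in_C by blast
  show ?thesis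
  proof (cases "C \<subseteq> {x0, x1}")
    case True
    then have "(C \<union> R) - (?S - {r}) = {r}" using R_eq r C_subset by blast
    then show ?thesis using S_subset admissible_S odd_r by (intro exI[of _ "?S - {r}"]) auto
  next
    case False
    then obtain x2 where x2: "x2 \<in> C - (?S - {r})" using C_subset R_eq by blast
    let ?S2 = "insert r (insert x2 (?S - {r}))"
    have "card ?S = 6" using distinct_card[OF distinct] by simp
    moreover have "r \<in> ?S" using r R_eq by blast
    ultimately have "card (?S - {r}) = 5" by (simp only: card_Diff_singleton)
    then have admissible_x2: "admissible V E (insert x2 (?S - {r}))"
      using admissible_insert_after_odd_removal[OF admissible_S S_subset] x2 by simp
    have "E x2 r" using adjacent_in_union[of x2 r] x2 r C_subset by blast
    then have "card ({x2} \<inter> {u. E r u}) = 1" using graph_sym[OF graph] by simp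
    moreover have S_subset_V: "?S - {r} \<subseteq> V" using S_subset union_subset by blast
    moreover have "{x2} \<subseteq> V - (?S - {r})" using x2 union_subset by blast
    moreover have "V - (?S - {r}) - {x2} = V - insert x2 (?S - {r})" by blast
    ultimately have "degree (V - insert x2 (?S - {r})) E r + 1 = degree (V - (?S - {r})) E r"
      using degree_Diff[OF graph_Diff[OF graph], of "{x2}" "?S - {r}" r] by simp
    with odd_r have "even (degree (V - insert x2 (?S - {r})) E r)" by (metis even_Suc Suc_eq_plus1)
    moreover have "r \<in> V - insert x2 (?S - {r})" using r x2 R_subset C_subset by blast
    ultimately have "admissible V E ?S2"
      using admissible_insert[OF graph _ admissible_x2] S_subset_V x2 union_subset by blast
    moreover have "R \<subseteq> ?S2" using R_eq by auto
    moreover have "?S2 \<subseteq> C \<union> R" using S_subset x2 r by auto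
    ultimately obtain S' where "admissible V E S'" "S' \<subseteq> C \<union> R" "(C \<union> R) - S' \<subseteq> C - ?S2"
      "\<forall>v\<in>(C \<union> R) - S'. odd (degree (V - S') E v)"
      using extend_to_odd_remainder[of ?S2] by blast
    moreover have "x0 \<in> ?S2" using apices_in_C r C_subset by blast
    ultimately show ?thesis by (intro exI[of _ S']) auto
  qed
qed

lemma exists_admissible_odd_clique_remainder:
  assumes "2 \<le> card C"
  shows "\<exists>S. S \<subseteq> C \<union> R \<and> admissible V E S \<and>
           clique E ((C \<union> R) - S) \<and> card ((C \<union> R) - S) \<le> card C - 1 \<and>
           (\<forall>v\<in>(C \<union> R) - S. odd (degree (V - S) E v))"
proof -
  obtain S where S: "S \<subseteq> C \<union> R" "admissible V E S" "\<forall>v\<in>(C \<union> R) - S. odd (degree (V - S) E v)"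
    and remainder: "(C \<union> R) - S \<subseteq> C - {x0} \<or> (\<exists>r. (C \<union> R) - S = {r})"
    using exists_admissible_odd_remainder by blast
  have "finite C" using C_subset graph_finite[OF graph] by (meson Diff_subset finite_subset subset_trans)
  from remainder have "clique E ((C \<union> R) - S) \<and> card ((C \<union> R) - S) \<le> card C - 1"
  proof
    assume subset: "(C \<union> R) - S \<subseteq> C - {x0}"
    then have "card ((C \<union> R) - S) \<le> card (C - {x0})" using \<open>finite C\<close> by (intro card_mono) auto
    moreover have "clique E ((C \<union> R) - S)" using clique subset unfolding clique_def by blast
    ultimately show ?thesis using apices_in_C by simp
  next
    assume "\<exists>r. (C \<union> R) - S = {r}"
    then obtain r where "(C \<union> R) - S = {r}" by blast
    then show ?thesis using assms by (simp add: clique_def)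
  qed
  with S show ?thesis by blast
qed

end

theorem mainTheorem10:
  fixes V :: "'a set" and E :: "'a \<Rightarrow> 'a \<Rightarrow> bool" and R C :: "'a set" and m :: nat
  assumes "graph V E"
    and "induced_P3 V E R"
    and "C \<subseteq> V - R" and "clique E C" and "card C = m" and "m \<ge> 2"
    and "\<forall>v\<in>C. odd (degree V E v)"
    and "\<forall>r\<in>R. \<forall>c\<in>C. E r c"
  shows "\<exists>S. S \<subseteq> C \<union> R \<and> admissible V E S \<and>
           clique E ((C \<union> R) - S) \<and> card ((C \<union> R) - S) \<le> m - 1 \<and>
           (\<forall>v\<in>(C \<union> R) - S. odd (degree (V - S) E v))"
proof -
  obtain a b c d where R: "R = {a, b, c, d}" "R \<subseteq> V" "distinct [a, b, c, d]"
    and path: "E a b" "E b c" "E c d" "\<not> E a c" "\<not> E a d" "\<not> E b d"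
    using assms(2) unfolding induced_P3_def by blast
  have "finite C" using assms(1,3) graph_finite by (meson Diff_subset finite_subset subset_trans)
  with assms(5,6) obtain x0 x1 where x: "x0 \<in> C" "x1 \<in> C" "x0 \<noteq> x1"
    using card_le_Suc0_iff_eq[of C] by fastforce
  have E_C_R: "E v r" if "r \<in> R" "v \<in> C" for r v
    using assms(8) that graph_sym[OF assms(1)] by blast
  interpret P3_joined_odd_clique V E R C a b c d x0 x1
    using assms R path x E_C_R by unfold_locales (auto simp: clique_def)
  show ?thesis using exists_admissible_odd_clique_remainder assms(5,6) by simp
qed

end
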